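(* Let $k\ge3$. There is no family of bijections $\omega_n:\mathcal S_n\to\mathfrak S_{n+1}(1243,2143)$, $n\ge0$, such that for every $n$ and every $\pi\in\mathcal S_n$, $\tau_k(\pi)$ equals the number of subsequences of type $213\ldots k$ in $\omega_n(\pi)$.
   Context: $\mathcal S_n$ is the set of Schröder paths: lattice paths from $(0,0)$ to $(n,n)$ using east $(1,0)$, north $(0,1)$ and diagonal $(1,1)$ steps never going below $y=x$. For an east or diagonal step $s$ with left-most point $(a,c)$, $ht(s)=c-a$. For a Schröder path $\pi$, $\tau_k(\pi)=\binom{0}{k-1}+\sum_s\binom{ht(s)}{k-1}$, summed over east and diagonal steps (with $\binom{i}{j}=0$ if $j<0$ or $i<j$). $\mathfrak S_m(1243,2143)$ is the set of permutations of $\{1,\dots,m\}$ with no subsequence of the same relative order as $1243$ or $2143$; a subsequence has type $\sigma$ if it has the same relative order as $\sigma$; $213\ldots k=2,1,3,\dots,k$. *)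

theory Defs
  imports Main
begin

datatype step = East | North | Diag

definition xco :: "step list \<Rightarrow> nat" where
  "xco s = length (filter (\<lambda>t. t \<noteq> North) s)"
definition yco :: "step list \<Rightarrow> nat" where
  "yco s = length (filter (\<lambda>t. t \<noteq> East) s)"

definition schroder :: "nat \<Rightarrow> step list set" where
  "schroder n = {p. xco p = n \<and> yco p = n \<and>
      (\<forall>i\<le>length p. xco (take i p) \<le> yco (take i p))}"

text \<open>Height of the i-th step (meaningful for East/Diag steps): c - a where (a,c) is its left-most point.\<close>
definition ht :: "step list \<Rightarrow> nat \<Rightarrow> nat" where
  "ht p i = yco (take i p) - xco (take i p)"

definition tau :: "nat \<Rightarrow> step list \<Rightarrow> nat" where
  "tau k p = (0 choose (k - 1)) +
     (\<Sum>i\<in>{i. i < length p \<and> p ! i \<noteq> North}. ht p i choose (k - 1))"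

definition occ :: "nat list \<Rightarrow> nat list \<Rightarrow> nat" where
  "occ \<sigma> w = card {is. length is = length \<sigma> \<and> sorted_wrt (<) is \<and> (\<forall>j\<in>set is. j < length w) \<and>
      (\<forall>a<length \<sigma>. \<forall>b<length \<sigma>. (w ! (is ! a) < w ! (is ! b)) \<longleftrightarrow> (\<sigma> ! a < \<sigma> ! b))}"

definition perms :: "nat \<Rightarrow> nat list set" where
  "perms m = {w. distinct w \<and> set w = {1..m}}"

definition avoiders :: "nat list list \<Rightarrow> nat \<Rightarrow> nat list set" where
  "avoiders ps m = {w \<in> perms m. \<forall>\<sigma>\<in>set ps. occ \<sigma> w = 0}"

definition pat213 :: "nat \<Rightarrow> nat list" where
  "pat213 k = 2 # 1 # [3..<k+1]"

end

theory Submission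
  imports Defs
begin

text \<open>Take n = k and the Schroeder path N^k E^k. Its first two east steps have heights k and k - 1,
  so tau_k is at least (k choose k-1) + (k-1 choose k-1) = k + 1. On the other hand a permutation of
  length k + 1 has only k + 1 subsequences of length k, and the two windows formed by positions
  1..k and 2..k+1 cannot both be of type 213...k: the entries at positions 2 and 3 would have to be
  increasing in the first and decreasing in the second. So the number of occurrences is at most k.\<close>

definition occurrences :: "nat list \<Rightarrow> nat list \<Rightarrow> nat list set" where
  "occurrences \<sigma> w = {is. length is = length \<sigma> \<and> sorted_wrt (<) is \<and> (\<forall>j\<in>set is. j < length w) \<and>
      (\<forall>a<length \<sigma>. \<forall>b<length \<sigma>. (w ! (is ! a) < w ! (is ! b)) \<longleftrightarrow> (\<sigma> ! a < \<sigma> ! b))}"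

lemma occ_eq_card_occurrences: "occ \<sigma> w = card (occurrences \<sigma> w)"
  by (simp add: occ_def occurrences_def)

lemma inj_on_set_occurrences: "inj_on set (occurrences \<sigma> w)"
  by (rule inj_onI) (auto simp: occurrences_def intro: strict_sorted_equal)

lemma card_occurrences_less_binomial:
  assumes "is \<notin> occurrences \<sigma> w" "sorted_wrt (<) is" "length is = length \<sigma>" "set is \<subseteq> {..<length w}"
  shows "card (occurrences \<sigma> w) < length w choose length \<sigma>"
proof -
  define F where "F = {A. A \<subseteq> {..<length w} \<and> card A = length \<sigma>}"
  have "finite F"
    unfolding F_def by (rule finite_subset[of _ "Pow {..<length w}"]) auto
  have "set is \<in> F"
    using assms(2-4) by (simp add: F_def strict_sorted_iff distinct_card)
  have "set ` occurrences \<sigma> w \<subseteq> F - {set is}"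
  proof
    fix A assume "A \<in> set ` occurrences \<sigma> w"
    then obtain xs where xs: "xs \<in> occurrences \<sigma> w" "A = set xs" by auto
    then have "A \<in> F"
      by (auto simp: occurrences_def F_def strict_sorted_iff distinct_card)
    moreover have "A \<noteq> set is"
      using xs assms(1,2) by (auto simp: occurrences_def dest: strict_sorted_equal)
    ultimately show "A \<in> F - {set is}" by simp
  qed
  then have "card (occurrences \<sigma> w) \<le> card (F - {set is})"
    using inj_on_set_occurrences \<open>finite F\<close>
    by (metis card_image card_mono finite_Diff)
  also have "\<dots> < card F"
    using \<open>finite F\<close> \<open>set is \<in> F\<close> by (rule card_Diff1_less)
  also have "card F = length w choose length \<sigma>"
    unfolding F_def by (simp add: n_subsets)
  finally show ?thesis .
qed

lemma shifted_windows_not_both_occurrences: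
  assumes "length \<sigma> \<ge> 3" "(\<sigma> ! 0 < \<sigma> ! 1) \<noteq> (\<sigma> ! 1 < \<sigma> ! 2)"
  shows "[0..<length \<sigma>] \<notin> occurrences \<sigma> w \<or> [1..<length \<sigma> + 1] \<notin> occurrences \<sigma> w"
proof (rule ccontr)
  assume "\<not> ?thesis"
  then have first: "\<forall>a<length \<sigma>. \<forall>b<length \<sigma>.
      (w ! ([0..<length \<sigma>] ! a) < w ! ([0..<length \<sigma>] ! b)) \<longleftrightarrow> (\<sigma> ! a < \<sigma> ! b)"
    and second: "\<forall>a<length \<sigma>. \<forall>b<length \<sigma>.
      (w ! ([1..<length \<sigma> + 1] ! a) < w ! ([1..<length \<sigma> + 1] ! b)) \<longleftrightarrow> (\<sigma> ! a < \<sigma> ! b)"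
    unfolding occurrences_def by blast+
  have "\<sigma> \<noteq> []"
    using assms(1) by auto
  have "(w ! 1 < w ! 2) \<longleftrightarrow> (\<sigma> ! 1 < \<sigma> ! 2)"
    using first[rule_format, of 1 2] assms(1) by (simp add: numeral_2_eq_2)
  moreover have "(w ! 1 < w ! 2) \<longleftrightarrow> (\<sigma> ! 0 < \<sigma> ! 1)"
    using second[rule_format, of 0 1] assms(1) \<open>\<sigma> \<noteq> []\<close>
    by (simp add: numeral_2_eq_2 nth_upt del: upt_Suc)
  ultimately show False
    using assms(2) by simp
qed

lemma occ_pat213_le:
  assumes "length w = k + 1" "k \<ge> 3"
  shows "occ (pat213 k) w \<le> k"
proof -
  let ?\<sigma> = "pat213 k"
  have len: "length ?\<sigma> = k"
    using assms(2) by (simp add: pat213_def)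
  have "?\<sigma> ! 0 = 2" "?\<sigma> ! 1 = 1" "?\<sigma> ! 2 = 3"
    using assms(2) by (auto simp: pat213_def upt_conv_Cons simp del: upt_Suc)
  then obtain "is" where "is \<notin> occurrences ?\<sigma> w" "is = [0..<k] \<or> is = [1..<k + 1]"
    using shifted_windows_not_both_occurrences[of ?\<sigma> w] assms(2) len by auto
  moreover from this(2) have "sorted_wrt (<) is" "length is = length ?\<sigma>" "set is \<subseteq> {..<length w}"
    using assms(1) len by (auto simp del: upt_Suc)
  ultimately have "card (occurrences ?\<sigma> w) < k + 1 choose k"
    using card_occurrences_less_binomial assms(1) len by metis
  then show ?thesis
    by (simp add: occ_eq_card_occurrences binomial_symmetric[of k "k + 1", simplified])
qed

lemma length_avoiders:
  assumes "w \<in> avoiders ps m"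
  shows "length w = m"
proof -
  have "distinct w" "set w = {1..m}"
    using assms by (auto simp: avoiders_def perms_def)
  then show ?thesis
    by (metis card_atLeastAtMost diff_Suc_1 distinct_card)
qed

lemma
  xco_take_north_east: "xco (take i (replicate k North @ replicate k East)) = min (i - k) k" and
  yco_take_north_east: "yco (take i (replicate k North @ replicate k East)) = min i k"
  by (cases "i \<le> k"; simp add: xco_def yco_def take_append)+

lemma north_east_in_schroder: "replicate k North @ replicate k East \<in> schroder k"
proof -
  let ?p = "replicate k North @ replicate k East"
  have "take (2 * k) ?p = ?p" by simp
  then have "xco ?p = k" "yco ?p = k"
    using xco_take_north_east[of "2 * k" k] yco_take_north_east[of "2 * k" k] by simp_all
  moreover have "\<forall>i. xco (take i ?p) \<le> yco (take i ?p)"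
    unfolding xco_take_north_east yco_take_north_east by (simp add: min_def)
  ultimately show ?thesis
    unfolding schroder_def by blast
qed

lemma tau_north_east_ge:
  assumes "k \<ge> 3"
  shows "tau k (replicate k North @ replicate k East) \<ge> k + 1"
proof -
  define p where "p = replicate k North @ replicate k East"
  define I where "I = {i. i < length p \<and> p ! i \<noteq> North}"
  have "{k, k + 1} \<subseteq> I"
    using assms by (auto simp: I_def p_def nth_append)
  have "ht p k = k" "ht p (k + 1) = k - 1"
    unfolding ht_def p_def xco_take_north_east yco_take_north_east by simp_all
  moreover have "k choose (k - 1) = k"
    using binomial_symmetric[of "k - 1" k] assms by simp
  ultimately have "k + 1 = (\<Sum>i\<in>{k, k + 1}. ht p i choose (k - 1))"
    using assms by simp
  also have "\<dots> \<le> (\<Sum>i\<in>I. ht p i choose (k - 1))"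
    using \<open>{k, k + 1} \<subseteq> I\<close> by (intro sum_mono2) (auto simp: I_def)
  also have "\<dots> \<le> tau k p"
    by (simp add: tau_def I_def)
  finally show ?thesis
    by (simp add: p_def)
qed

theorem mainTheorem18:
  fixes k :: nat
  assumes "k \<ge> 3"
  shows "\<not> (\<exists>\<omega> :: nat \<Rightarrow> step list \<Rightarrow> nat list.
            \<forall>n. bij_betw (\<omega> n) (schroder n) (avoiders [[1,2,4,3],[2,1,4,3]] (n+1)) \<and>
                (\<forall>\<pi>\<in>schroder n. tau k \<pi> = occ (pat213 k) (\<omega> n \<pi>)))"
proof
  assume "\<exists>\<omega> :: nat \<Rightarrow> step list \<Rightarrow> nat list.
            \<forall>n. bij_betw (\<omega> n) (schroder n) (avoiders [[1,2,4,3],[2,1,4,3]] (n+1)) \<and>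
                (\<forall>\<pi>\<in>schroder n. tau k \<pi> = occ (pat213 k) (\<omega> n \<pi>))"
  then obtain \<omega> :: "nat \<Rightarrow> step list \<Rightarrow> nat list" where
    bij: "bij_betw (\<omega> k) (schroder k) (avoiders [[1,2,4,3],[2,1,4,3]] (k+1))" and
    tau_occ: "\<forall>\<pi>\<in>schroder k. tau k \<pi> = occ (pat213 k) (\<omega> k \<pi>)"
    by blast
  define p where "p = replicate k North @ replicate k East"
  have "p \<in> schroder k"
    unfolding p_def by (rule north_east_in_schroder)
  then have "length (\<omega> k p) = k + 1"
    using bij by (auto simp: bij_betw_def intro: length_avoiders)
  then have "tau k p \<le> k"
    using tau_occ \<open>p \<in> schroder k\<close> occ_pat213_le assms by simp
  moreover have "tau k p \<ge> k + 1"
    unfolding p_def using tau_north_east_ge assms .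
  ultimately show False by simp
qed

end
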